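(* Let $(a_{n,k})_{n,k\ge 1}$ be complex numbers such that every series of the form $\sum_{n=1}^{\infty}\prod_{j=1}^{m}a_{n,k_j}$ (with $m\in\mathbb{N}$, $k_1,\dots,k_m\in\mathbb{N}$) converges. Let $m\in\mathbb{N}$, $k_1,\dots,k_m\in\mathbb{N}$ and $L=[k_1,\dots,k_m]$. Then $$\sum_{\substack{n_1,\dots,n_m\ge 1\\ \text{pairwise distinct}}}\ \prod_{j=1}^{m}a_{n_j,k_j}=\sum_{\sigma\in S_m}\operatorname{sign}(\sigma)\,\mathbb{A}_{\sigma,L}.$$
   Context: $S_m$ is the symmetric group on $\{1,\dots,m\}$ and $\operatorname{sign}(\sigma)$ the sign of a permutation. For $\sigma\in S_m$, write $\sigma$ as a product of disjoint cycles $C_1,\dots,C_{r}$, where fixed points are kept as cycles of length one (so the cycles partition $\{1,\dots,m\}$). Then $$\mathbb{A}_{\sigma,L}:=\prod_{t=1}^{r}\Big(\sum_{n=1}^{\infty}\prod_{i\in C_t}a_{n,k_i}\Big).$$ For example, for $\sigma=(1\,2\,4)(3\,6)(5)\in S_6$, $\mathbb{A}_{\sigma,L}=\big(\sum_n a_{n,k_1}a_{n,k_2}a_{n,k_4}\big)\big(\sum_n a_{n,k_3}a_{n,k_6}\big)\big(\sum_n a_{n,k_5}\big)$. *)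

theory Defs
  imports "HOL-Analysis.Analysis" "HOL-Combinatorics.Combinatorics"
begin

definition perm_cycles :: "nat \<Rightarrow> (nat \<Rightarrow> nat) \<Rightarrow> nat set set" where
  "perm_cycles m \<sigma> = (\<lambda>i. orbit \<sigma> i) ` {1..m}"

text \<open>A_{sigma,L} for L = [k 1, ..., k m]; the series runs over n >= 1.\<close>
definition A_sigma :: "(nat \<Rightarrow> nat \<Rightarrow> complex) \<Rightarrow> nat \<Rightarrow> (nat \<Rightarrow> nat) \<Rightarrow> (nat \<Rightarrow> nat) \<Rightarrow> complex" where
  "A_sigma a m k \<sigma> = (\<Prod>C\<in>perm_cycles m \<sigma>. (\<Sum>n. \<Prod>i\<in>C. a (Suc n) (k i)))"

definition distinct_sum :: "(nat \<Rightarrow> nat \<Rightarrow> complex) \<Rightarrow> nat \<Rightarrow> (nat \<Rightarrow> nat) \<Rightarrow> nat \<Rightarrow> complex" where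
  "distinct_sum a m k N =
     (\<Sum>ns\<in>{ns \<in> {1..m} \<rightarrow>\<^sub>E {1..N}. inj_on ns {1..m}}. \<Prod>j=1..m. a (ns j) (k j))"

end

theory Submission
  imports Defs
begin

text \<open>
  Truncate every series after N terms. Expanding the product over the cycles of \<sigma> of the cycle
  sums gives the sum of \<Prod>j a (n j) (k j) over all maps n : {1..m} \<rightarrow> {1..N} that are
  constant on the cycles of \<sigma>, i.e. with n \<circ> \<sigma> = n. Exchanging the two summations, the
  coefficient of a fixed map n is the sum of sign \<sigma> over the permutations fixing n. For
  injective n only the identity fixes n; otherwise n takes equal values at some p \<noteq> q, and
  composing with the transposition of p and q is a sign-reversing involution, so the
  coefficient vanishes. Hence the identity holds exactly for each N, and the theorem follows
  by letting N \<rightarrow> \<infinity>, since every cycle series converges by hypothesis.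
\<close>

lemma prod_sum_eq_sum_blockwise_constant:
  fixes f :: "'b \<Rightarrow> 'a \<Rightarrow> 'c :: comm_semiring_1" and B :: "'a \<Rightarrow> 'a set"
  assumes I: "finite I" and S: "finite S"
    and self_in: "\<And>i. i \<in> I \<Longrightarrow> i \<in> B i"
    and block: "\<And>i j. i \<in> I \<Longrightarrow> j \<in> B i \<Longrightarrow> j \<in> I \<and> B j = B i"
  shows "(\<Prod>C\<in>B ` I. \<Sum>n\<in>S. \<Prod>i\<in>C. f n i) =
         (\<Sum>ns\<in>{ns \<in> I \<rightarrow>\<^sub>E S. \<forall>i\<in>I. \<forall>j\<in>B i. ns j = ns i}. \<Prod>i\<in>I. f (ns i) i)"
proof -
  define rep where "rep C = (SOME i. i \<in> C)" for C :: "'a set"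
  have rep_in: "rep (B i) \<in> B i" if "i \<in> I" for i
    unfolding rep_def using self_in[OF that] by (rule someI)
  have rep_in_I: "rep (B i) \<in> I" if "i \<in> I" for i
    using block[OF that rep_in[OF that]] by simp
  have prod_by_blocks: "(\<Prod>i\<in>I. g i) = (\<Prod>C\<in>B ` I. \<Prod>i\<in>C. g i)" for g :: "'a \<Rightarrow> 'c"
  proof -
    have "{j \<in> I. B j = B i} = B i" if "i \<in> I" for i
      using that self_in block by blast
    then have "(\<Prod>C\<in>B ` I. \<Prod>i\<in>C. g i) = (\<Prod>C\<in>B ` I. \<Prod>i\<in>{j \<in> I. B j = C}. g i)"
      by (auto intro: prod.cong)
    also have "\<dots> = (\<Prod>i\<in>I. g i)"
      using prod.group[OF I finite_imageI[OF I] subset_refl] .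
    finally show ?thesis ..
  qed
  have "(\<Prod>C\<in>B ` I. \<Sum>n\<in>S. \<Prod>i\<in>C. f n i) = (\<Sum>h\<in>B ` I \<rightarrow>\<^sub>E S. \<Prod>C\<in>B ` I. \<Prod>i\<in>C. f (h C) i)"
    using I S by (intro prod_sum_PiE) auto
  also have "\<dots> = (\<Sum>ns\<in>{ns \<in> I \<rightarrow>\<^sub>E S. \<forall>i\<in>I. \<forall>j\<in>B i. ns j = ns i}. \<Prod>i\<in>I. f (ns i) i)"
  proof (rule sum.reindex_bij_witness[where j = "\<lambda>h. restrict (h \<circ> B) I"
                                        and i = "\<lambda>ns. restrict (ns \<circ> rep) (B ` I)"])
    fix h assume h: "h \<in> B ` I \<rightarrow>\<^sub>E S"
    show "restrict (restrict (h \<circ> B) I \<circ> rep) (B ` I) = h"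
    proof
      fix C show "restrict (restrict (h \<circ> B) I \<circ> rep) (B ` I) C = h C"
      proof (cases "C \<in> B ` I")
        case True
        then obtain i where i: "i \<in> I" "C = B i" by blast
        then have "rep C \<in> I" "B (rep C) = C"
          using block[OF i(1) rep_in[OF i(1)]] by simp_all
        then show ?thesis using True by simp
      qed (simp add: PiE_arb[OF h])
    qed
    have restrict_const: "restrict (h \<circ> B) I j = h (B i)" if "i \<in> I" "j \<in> B i" for i j
      using block[OF that] by simp
    show "restrict (h \<circ> B) I \<in> {ns \<in> I \<rightarrow>\<^sub>E S. \<forall>i\<in>I. \<forall>j\<in>B i. ns j = ns i}"
      using h self_in restrict_const by auto
    have "(\<Prod>i\<in>I. f (restrict (h \<circ> B) I i) i) = (\<Prod>C\<in>B ` I. \<Prod>j\<in>C. f (restrict (h \<circ> B) I j) j)"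
      by (rule prod_by_blocks)
    also have "\<dots> = (\<Prod>C\<in>B ` I. \<Prod>j\<in>C. f (h C) j)"
      by (intro prod.cong refl) (auto dest: block)
    finally show "(\<Prod>i\<in>I. f (restrict (h \<circ> B) I i) i) = (\<Prod>C\<in>B ` I. \<Prod>i\<in>C. f (h C) i)" .
  next
    fix ns assume ns: "ns \<in> {ns \<in> I \<rightarrow>\<^sub>E S. \<forall>i\<in>I. \<forall>j\<in>B i. ns j = ns i}"
    then have ns_PiE: "ns \<in> I \<rightarrow>\<^sub>E S" and ns_const: "\<And>i j. i \<in> I \<Longrightarrow> j \<in> B i \<Longrightarrow> ns j = ns i"
      by blast+
    show "restrict (restrict (ns \<circ> rep) (B ` I) \<circ> B) I = ns"
    proof
      fix i show "restrict (restrict (ns \<circ> rep) (B ` I) \<circ> B) I i = ns i"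
      proof (cases "i \<in> I")
        case True
        then show ?thesis using ns_const[OF True rep_in[OF True]] by simp
      qed (simp add: PiE_arb[OF ns_PiE])
    qed
    show "restrict (ns \<circ> rep) (B ` I) \<in> B ` I \<rightarrow>\<^sub>E S"
      using ns_PiE rep_in_I by auto
  qed
  finally show ?thesis .
qed

lemma permutes_invariant_iff_constant_on_orbits:
  assumes "\<sigma> permutes I"
  shows "(\<forall>i\<in>I. ns (\<sigma> i) = ns i) \<longleftrightarrow> (\<forall>i\<in>I. \<forall>j\<in>orbit \<sigma> i. ns j = ns i)"
proof
  assume invariant: "\<forall>i\<in>I. ns (\<sigma> i) = ns i"
  show "\<forall>i\<in>I. \<forall>j\<in>orbit \<sigma> i. ns j = ns i"
  proof (intro ballI)
    fix i j assume i: "i \<in> I" and j: "j \<in> orbit \<sigma> i"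
    from j show "ns j = ns i"
    proof induction
      case (step j)
      then have "j \<in> I" using permutes_orbit_subset[OF assms i] by blast
      with step.IH invariant show ?case by simp
    qed (use invariant i in simp)
  qed
qed (auto intro: orbit.base)

lemma prod_orbits_sum_eq_sum_invariant:
  fixes f :: "'b \<Rightarrow> 'a \<Rightarrow> 'c :: comm_semiring_1"
  assumes \<sigma>: "\<sigma> permutes I" and I: "finite I" and S: "finite S"
  shows "(\<Prod>C\<in>orbit \<sigma> ` I. \<Sum>n\<in>S. \<Prod>i\<in>C. f n i) =
         (\<Sum>ns\<in>{ns \<in> I \<rightarrow>\<^sub>E S. \<forall>i\<in>I. ns (\<sigma> i) = ns i}. \<Prod>i\<in>I. f (ns i) i)"
proof -
  have "permutation \<sigma>"
    using \<sigma> I permutation_permutes by blast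
  then have "i \<in> orbit \<sigma> i" "j \<in> orbit \<sigma> i \<Longrightarrow> j \<in> I \<and> orbit \<sigma> j = orbit \<sigma> i" if "i \<in> I" for i j
    using that permutes_orbit_subset[OF \<sigma>]
    by (auto simp: permutation_self_in_orbit orbit_cyclic_eq3[OF cyclic_on_orbit'])
  then have "(\<Prod>C\<in>orbit \<sigma> ` I. \<Sum>n\<in>S. \<Prod>i\<in>C. f n i) =
      (\<Sum>ns\<in>{ns \<in> I \<rightarrow>\<^sub>E S. \<forall>i\<in>I. \<forall>j\<in>orbit \<sigma> i. ns j = ns i}. \<Prod>i\<in>I. f (ns i) i)"
    by (rule prod_sum_eq_sum_blockwise_constant[OF I S])
  also have "\<dots> = (\<Sum>ns\<in>{ns \<in> I \<rightarrow>\<^sub>E S. \<forall>i\<in>I. ns (\<sigma> i) = ns i}. \<Prod>i\<in>I. f (ns i) i)"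
    by (simp only: permutes_invariant_iff_constant_on_orbits[OF \<sigma>])
  finally show ?thesis .
qed

lemma sum_sign_permutes_invariant:
  assumes I: "finite I"
  shows "(\<Sum>\<sigma> | \<sigma> permutes I \<and> (\<forall>i\<in>I. ns (\<sigma> i) = ns i). sign \<sigma>) = (if inj_on ns I then 1 else 0)"
proof (cases "inj_on ns I")
  case True
  have "\<sigma> = id" if "\<sigma> permutes I" "\<forall>i\<in>I. ns (\<sigma> i) = ns i" for \<sigma>
  proof
    fix i show "\<sigma> i = id i"
    proof (cases "i \<in> I")
      case i: True
      then have "\<sigma> i \<in> I"
        by (simp add: permutes_in_image[OF that(1)])
      with i that(2) show ?thesis
        by (simp add: inj_onD[OF True])
    qed (simp add: permutes_not_in[OF that(1)])
  qed
  then have "{\<sigma>. \<sigma> permutes I \<and> (\<forall>i\<in>I. ns (\<sigma> i) = ns i)} = {id}"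
    by auto
  with True show ?thesis by simp
next
  case False
  then obtain p q where pq: "p \<in> I" "q \<in> I" "p \<noteq> q" "ns p = ns q"
    unfolding inj_on_def by blast
  define \<tau> where "\<tau> = Transposition.transpose p q"
  define U where "U = {\<sigma>. \<sigma> permutes I \<and> (\<forall>i\<in>I. ns (\<sigma> i) = ns i)}"
  have \<tau>: "\<tau> permutes I" "ns \<circ> \<tau> = ns" "\<tau> \<circ> \<tau> = id"
    using pq by (auto simp: \<tau>_def permutes_swap_id Transposition.transpose_def fun_eq_iff)
  have sign_\<tau>: "sign (\<tau> \<circ> \<sigma>) = - sign \<sigma>" if "\<sigma> \<in> U" for \<sigma>
  proof -
    have "permutation \<sigma>" "permutation \<tau>"
      using that \<tau>(1) I by (auto simp: U_def permutation_permutes)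
    then show ?thesis
      using pq(3) by (simp add: sign_compose \<tau>_def sign_swap_id)
  qed
  have U_closed: "\<tau> \<circ> \<sigma> \<in> U" if "\<sigma> \<in> U" for \<sigma>
    using that \<tau>(1) fun_cong[OF \<tau>(2)] by (simp add: U_def permutes_compose)
  have "(\<Sum>\<sigma>\<in>U. sign \<sigma>) = (\<Sum>\<sigma>\<in>U. sign (\<tau> \<circ> \<sigma>))"
    using U_closed \<tau>(3)
    by (intro sum.reindex_bij_witness[where i = "(\<circ>) \<tau>" and j = "(\<circ>) \<tau>"]) (auto simp: o_assoc)
  also have "\<dots> = - (\<Sum>\<sigma>\<in>U. sign \<sigma>)"
    by (simp add: sign_\<tau> sum_negf)
  finally show ?thesis
    using False by (simp add: U_def)
qed

lemma sum_sign_mult_sum_invariant_eq_sum_inj: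
  fixes F :: "('a \<Rightarrow> 'b) \<Rightarrow> 'c :: comm_ring_1"
  assumes I: "finite I" and S: "finite S"
  shows "(\<Sum>\<sigma> | \<sigma> permutes I. of_int (sign \<sigma>) * (\<Sum>ns\<in>{ns \<in> I \<rightarrow>\<^sub>E S. \<forall>i\<in>I. ns (\<sigma> i) = ns i}. F ns)) =
         (\<Sum>ns\<in>{ns \<in> I \<rightarrow>\<^sub>E S. inj_on ns I}. F ns)"
proof -
  have "(\<Sum>\<sigma> | \<sigma> permutes I. of_int (sign \<sigma>) * (\<Sum>ns\<in>{ns \<in> I \<rightarrow>\<^sub>E S. \<forall>i\<in>I. ns (\<sigma> i) = ns i}. F ns)) =
      (\<Sum>\<sigma> | \<sigma> permutes I. \<Sum>ns\<in>{ns \<in> I \<rightarrow>\<^sub>E S. \<forall>i\<in>I. ns (\<sigma> i) = ns i}. of_int (sign \<sigma>) * F ns)"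
    by (simp add: sum_distrib_left)
  also have "\<dots> = (\<Sum>ns\<in>I \<rightarrow>\<^sub>E S. \<Sum>\<sigma> | \<sigma> permutes I \<and> (\<forall>i\<in>I. ns (\<sigma> i) = ns i). of_int (sign \<sigma>) * F ns)"
    using sum.swap_restrict[OF finite_permutations[OF I] finite_PiE[OF I S]] by simp
  also have "\<dots> = (\<Sum>ns\<in>I \<rightarrow>\<^sub>E S. of_int (\<Sum>\<sigma> | \<sigma> permutes I \<and> (\<forall>i\<in>I. ns (\<sigma> i) = ns i). sign \<sigma>) * F ns)"
    by (simp add: sum_distrib_right)
  also have "\<dots> = (\<Sum>ns\<in>I \<rightarrow>\<^sub>E S. if inj_on ns I then F ns else 0)"
    by (intro sum.cong refl) (simp add: sum_sign_permutes_invariant[OF I])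
  also have "\<dots> = (\<Sum>ns\<in>{ns \<in> I \<rightarrow>\<^sub>E S. inj_on ns I}. F ns)"
    by (simp add: sum.inter_filter[OF finite_PiE[OF I S]])
  finally show ?thesis .
qed

lemma distinct_sum_eq_sum_sign_cycles:
  "distinct_sum a m k N =
     (\<Sum>\<sigma> | \<sigma> permutes {1..m}. of_int (sign \<sigma>) * (\<Prod>C\<in>perm_cycles m \<sigma>. \<Sum>n<N. \<Prod>i\<in>C. a (Suc n) (k i)))"
proof -
  have shift: "(\<Sum>n<N. \<Prod>i\<in>C. a (Suc n) (k i)) = (\<Sum>n=1..N. \<Prod>i\<in>C. a n (k i))" for C
    by (rule sum_bounds_lt_plus1)
  have "(\<Prod>C\<in>perm_cycles m \<sigma>. \<Sum>n<N. \<Prod>i\<in>C. a (Suc n) (k i)) =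
      (\<Sum>ns\<in>{ns \<in> {1..m} \<rightarrow>\<^sub>E {1..N}. \<forall>i\<in>{1..m}. ns (\<sigma> i) = ns i}. \<Prod>i\<in>{1..m}. a (ns i) (k i))"
    if "\<sigma> permutes {1..m}" for \<sigma>
    using prod_orbits_sum_eq_sum_invariant[OF that finite_atLeastAtMost finite_atLeastAtMost, of "\<lambda>n i. a n (k i)"]
    unfolding perm_cycles_def shift .
  then have "(\<Sum>\<sigma> | \<sigma> permutes {1..m}. of_int (sign \<sigma>) * (\<Prod>C\<in>perm_cycles m \<sigma>. \<Sum>n<N. \<Prod>i\<in>C. a (Suc n) (k i))) =
      (\<Sum>\<sigma> | \<sigma> permutes {1..m}. of_int (sign \<sigma>) *
         (\<Sum>ns\<in>{ns \<in> {1..m} \<rightarrow>\<^sub>E {1..N}. \<forall>i\<in>{1..m}. ns (\<sigma> i) = ns i}. \<Prod>i\<in>{1..m}. a (ns i) (k i)))"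
    by (intro sum.cong refl) simp
  also have "\<dots> = distinct_sum a m k N"
    unfolding distinct_sum_def by (rule sum_sign_mult_sum_invariant_eq_sum_inj) simp_all
  finally show ?thesis ..
qed

lemma summable_prod_finite_index_set:
  fixes a :: "nat \<Rightarrow> nat \<Rightarrow> 'a :: {comm_monoid_mult, topological_comm_monoid_add}"
  assumes conv: "\<And>(m'::nat) (k'::nat \<Rightarrow> nat). m' \<ge> 1 \<Longrightarrow> (\<forall>j\<in>{1..m'}. k' j \<ge> 1) \<Longrightarrow>
                   summable (\<lambda>n. \<Prod>j=1..m'. a (Suc n) (k' j))"
    and C: "finite C" "C \<noteq> {}" "\<forall>i\<in>C. k i \<ge> 1"
  shows "summable (\<lambda>n. \<Prod>i\<in>C. a (Suc n) (k i))"
proof -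
  obtain h where h: "bij_betw h {1..card C} C"
    using ex_bij_betw_nat_finite_1[OF C(1)] by blast
  have "card C \<ge> 1"
    using C(1,2) by (simp add: Suc_le_eq card_gt_0_iff)
  moreover have "\<forall>j\<in>{1..card C}. k (h j) \<ge> 1"
    using C(3) bij_betwE[OF h] by blast
  ultimately have "summable (\<lambda>n. \<Prod>j=1..card C. a (Suc n) (k (h j)))"
    by (rule conv)
  moreover have "(\<Prod>j=1..card C. a (Suc n) (k (h j))) = (\<Prod>i\<in>C. a (Suc n) (k i))" for n
    by (rule prod.reindex_bij_betw[OF h])
  ultimately show ?thesis
    by simp
qed

theorem mainTheorem1:
  fixes a :: "nat \<Rightarrow> nat \<Rightarrow> complex" and m :: nat and k :: "nat \<Rightarrow> nat"
  assumes conv: "\<And>(m'::nat) (k'::nat \<Rightarrow> nat). m' \<ge> 1 \<Longrightarrow> (\<forall>j\<in>{1..m'}. k' j \<ge> 1) \<Longrightarrow>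
                   summable (\<lambda>n. \<Prod>j=1..m'. a (Suc n) (k' j))"
    and m: "m \<ge> 1"
    and k: "\<forall>j\<in>{1..m}. k j \<ge> 1"
  shows "(\<lambda>N. distinct_sum a m k N) \<longlonglongrightarrow>
           (\<Sum>\<sigma> | \<sigma> permutes {1..m}. of_int (sign \<sigma>) * A_sigma a m k \<sigma>)"
proof -
  have "(\<lambda>N. \<Sum>n<N. \<Prod>i\<in>C. a (Suc n) (k i)) \<longlonglongrightarrow> (\<Sum>n. \<Prod>i\<in>C. a (Suc n) (k i))"
    if \<sigma>: "\<sigma> permutes {1..m}" and C: "C \<in> perm_cycles m \<sigma>" for \<sigma> C
  proof (rule summable_LIMSEQ, rule summable_prod_finite_index_set[OF conv])
    obtain j where j: "j \<in> {1..m}" "C = orbit \<sigma> j"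
      using C by (auto simp: perm_cycles_def)
    then have "C \<subseteq> {1..m}"
      using permutes_orbit_subset[OF \<sigma>] by blast
    then show "finite C" "\<forall>i\<in>C. 1 \<le> k i"
      using k finite_subset by auto
    show "C \<noteq> {}"
      by (simp add: j(2) orbit_nonempty)
  qed
  then show ?thesis
    unfolding distinct_sum_eq_sum_sign_cycles A_sigma_def
    by (intro tendsto_sum tendsto_mult tendsto_const tendsto_prod) auto
qed

end
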